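(* Fix an integer $k\ge0$. Then $n\mapsto p_S(n,n+k)$ is increasing on the integers $n\ge k$: for all integers $n_2>n_1\ge k$, $p_S(n_1,n_1+k)<p_S(n_2,n_2+k)$.
   Context: For integers $n,m$, $p_S(n,m)$ is the number of $(x_1,x_2,x_3,x_4)\in\mathbb{Z}_{\ge0}^4$ with $x_1+x_3+x_4=n$ and $x_2+x_3+2x_4=m$ (the number of vector partitions of $(n,m)$ with parts in $\{(1,0),(0,1),(1,1),(1,2)\}$). *)

theory Defs
  imports Main
begin

definition pS :: "int \<Rightarrow> int \<Rightarrow> nat" where
  "pS n m = card {(x1::nat, x2::nat, x3::nat, x4::nat).
      int x1 + int x3 + int x4 = n \<and> int x2 + int x3 + 2 * int x4 = m}"

end

theory Submission
  imports Defs
begin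

text \<open>Adding 1 to both x1 and x2 maps the solutions for (n, m) injectively to those for
  (n + 1, m + 1) and misses every solution with x1 = x2 = 0. On the line m = n + k with
  0 \<le> k \<le> n + 1 such a solution exists, namely (0, 0, n + 1 - k, k), so the count grows
  strictly along that line.\<close>

lemma finite_pS_solutions:
  "finite {(x1::nat, x2::nat, x3::nat, x4::nat).
      int x1 + int x3 + int x4 = n \<and> int x2 + int x3 + 2 * int x4 = m}"
proof (rule finite_subset)
  show "{(x1::nat, x2::nat, x3::nat, x4::nat).
      int x1 + int x3 + int x4 = n \<and> int x2 + int x3 + 2 * int x4 = m}
    \<subseteq> {..nat n} \<times> {..nat m} \<times> {..nat n} \<times> {..nat n}"
    by auto
qed auto

lemma pS_less_pS_add_one:
  fixes n m :: int
  assumes "0 \<le> m - n" and "m - n \<le> n + 1"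
  shows "pS n m < pS (n + 1) (m + 1)"
proof -
  define S where "S n m = {(x1::nat, x2::nat, x3::nat, x4::nat).
      int x1 + int x3 + int x4 = n \<and> int x2 + int x3 + 2 * int x4 = m}" for n m
  define shift where "shift = (\<lambda>(x1::nat, x2::nat, x3::nat, x4::nat). (Suc x1, Suc x2, x3, x4))"
  have "inj_on shift (S n m)"
    by (auto simp: shift_def inj_on_def)
  moreover have "shift ` S n m \<subset> S (n + 1) (m + 1)"
  proof
    show "shift ` S n m \<subseteq> S (n + 1) (m + 1)"
      by (auto simp: shift_def S_def)
    have "(0, 0, nat (2 * n + 1 - m), nat (m - n)) \<in> S (n + 1) (m + 1) - shift ` S n m"
      using assms by (auto simp: shift_def S_def)
    then show "shift ` S n m \<noteq> S (n + 1) (m + 1)"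
      by blast
  qed
  then have "card (shift ` S n m) < card (S (n + 1) (m + 1))"
    by (rule psubset_card_mono[OF finite_pS_solutions[folded S_def]])
  ultimately show ?thesis
    by (simp add: pS_def S_def[symmetric] card_image)
qed

theorem lemmaA3:
  fixes k n1 n2 :: int
  assumes "k \<ge> 0" and "k \<le> n1" and "n1 < n2"
  shows "pS n1 (n1 + k) < pS n2 (n2 + k)"
proof -
  define f where "f d = pS (k + int d) (k + int d + k)" for d :: nat
  have "f d < f (Suc d)" for d
  proof -
    have "pS (k + int d) (k + int d + k) < pS (k + int d + 1) (k + int d + k + 1)"
      using \<open>k \<ge> 0\<close> by (simp add: pS_less_pS_add_one)
    moreover have "k + int (Suc d) = k + int d + 1"
      by simp
    ultimately show ?thesis
      unfolding f_def by (simp only: ac_simps)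
  qed
  then have "f (nat (n1 - k)) < f (nat (n2 - k))"
    by (rule lift_Suc_mono_less) (use assms in auto)
  then show ?thesis
    using assms by (simp add: f_def)
qed

end
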